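(* Let $n\ge1$. If $A\subseteq\Omega_n$ has odd cardinality, then $\mu_n(A)\neq0$.
   Context: For $n\ge1$, $\Omega_n$ is the set of strings $\omega=\alpha_0\alpha_1\cdots\alpha_n$ with $\alpha_k\in\{0,1\}$, $\alpha_0=0$. For $\omega=\alpha_0\cdots\alpha_n$, $\omega'=\alpha'_0\cdots\alpha'_n\in\Omega_n$ let $D^n(\omega,\omega')=2^{-n}\prod_{k=1}^n i^{|\alpha_k-\alpha_{k-1}|}\prod_{k=1}^n i^{-|\alpha'_k-\alpha'_{k-1}|}\,\delta_{\alpha_n\alpha'_n}$ ($i=\sqrt{-1}$), and for $A\subseteq\Omega_n$ let $\mu_n(A)=\sum_{\omega,\omega'\in A}D^n(\omega,\omega')$. *)

theory Defs
  imports Complex_Main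
begin

definition Omega :: "nat \<Rightarrow> nat list set" where
  "Omega n = {w. length w = n + 1 \<and> set w \<subseteq> {0, 1} \<and> w ! 0 = 0}"

definition D :: "nat \<Rightarrow> nat list \<Rightarrow> nat list \<Rightarrow> complex" where
  "D n w w' =
     (1 / 2 ^ n) *
     (\<Prod>k\<in>{1..n}. \<i> powi \<bar>int (w ! k) - int (w ! (k - 1))\<bar>) *
     (\<Prod>k\<in>{1..n}. \<i> powi (- \<bar>int (w' ! k) - int (w' ! (k - 1))\<bar>)) *
     (if w ! n = w' ! n then 1 else 0)"

definition mu :: "nat \<Rightarrow> nat list set \<Rightarrow> complex" where
  "mu n A = (\<Sum>w\<in>A. \<Sum>w'\<in>A. D n w w')"

end

theory Submission
  imports Defs
begin

text \<open>Write \<open>\<epsilon>(\<omega>) = \<Prod>\<^sub>k i^|\<alpha>\<^sub>k - \<alpha>\<^sub>k\<^sub>-\<^sub>1| = i^V(\<omega>)\<close>, where \<open>V(\<omega>)\<close> is the total variation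
  of \<open>\<omega>\<close>. Then \<open>D\<^sup>n(\<omega>,\<omega>') = 2\<^sup>-\<^sup>n \<epsilon>(\<omega>) cnj \<epsilon>(\<omega>') [\<alpha>\<^sub>n = \<alpha>'\<^sub>n]\<close>, so \<open>2\<^sup>n \<mu>\<^sub>n(A)\<close> is the
  sum over the endpoints \<open>b\<close> of \<open>|\<Sum>\<epsilon>(\<omega>)|\<^sup>2\<close>, taken over the \<open>\<omega> \<in> A\<close> with \<open>\<alpha>\<^sub>n = b\<close>.
  Since \<open>V(\<omega>) \<equiv> \<alpha>\<^sub>n - \<alpha>\<^sub>0 (mod 2)\<close>, on such a class every \<open>\<epsilon>(\<omega>)\<close> is \<open>\<plusminus>i\<^sup>b\<close>, so the class
  sum is \<open>i\<^sup>b\<close> times an integer of the parity of the class size. If \<open>|A|\<close> is odd, some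
  class is odd, its sum is nonzero, and \<open>\<mu>\<^sub>n(A) > 0\<close>.\<close>

definition variation :: "nat \<Rightarrow> nat list \<Rightarrow> nat" where
  "variation n w = (\<Sum>k\<in>{1..n}. nat \<bar>int (w ! k) - int (w ! (k - 1))\<bar>)"

lemma prod_i_powi_eq_i_power_variation:
  "(\<Prod>k\<in>{1..n}. \<i> powi \<bar>int (w ! k) - int (w ! (k - 1))\<bar>) = \<i> ^ variation n w"
  by (simp add: variation_def power_sum power_int_def)

lemma D_eq_i_power_variation:
  "D n w w' = \<i> ^ variation n w * cnj (\<i> ^ variation n w') * (if w ! n = w' ! n then 1 else 0) / 2 ^ n"
proof -
  have "\<i> powi (- k) = cnj (\<i> powi k)" for k :: int
    by (metis complex_cnj_power_int complex_cnj_i inverse_i power_int_inverse power_int_minus)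
  then have conj_factor:
    "(\<Prod>k\<in>{1..n}. \<i> powi (- \<bar>int (w' ! k) - int (w' ! (k - 1))\<bar>)) = cnj (\<i> ^ variation n w')"
    by (simp add: cnj_prod flip: prod_i_powi_eq_i_power_variation)
  show ?thesis
    unfolding D_def conj_factor prod_i_powi_eq_i_power_variation by simp
qed

lemma even_variation_minus_displacement:
  "even (int (variation n w) - (int (w ! n) - int (w ! 0)))"
proof -
  have "int (w ! n) - int (w ! 0) = (\<Sum>k\<in>{1..n}. int (w ! k) - int (w ! (k - 1)))"
    by (induction n) simp_all
  then have "int (variation n w) - (int (w ! n) - int (w ! 0))
      = (\<Sum>k\<in>{1..n}. \<bar>int (w ! k) - int (w ! (k - 1))\<bar> - (int (w ! k) - int (w ! (k - 1))))"
    by (simp add: variation_def sum_subtractf)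
  also have "even \<dots>"
    by (intro dvd_sum) (auto simp: abs_if)
  finally show ?thesis .
qed

lemma variation_mod_2:
  assumes "w \<in> Omega n"
  shows "variation n w mod 2 = w ! n"
proof -
  have "n < length w" "set w \<subseteq> {0, 1}" "w ! 0 = 0"
    using assms by (simp_all add: Omega_def)
  then have "w ! n \<in> {0, 1}" using nth_mem by blast
  then show ?thesis
    using even_variation_minus_displacement[of n w] \<open>w ! 0 = 0\<close> by auto presburger+
qed

lemma sum_sum_cnj_eq_sum_norm_fibres:
  fixes f :: "'a \<Rightarrow> complex" and g :: "'a \<Rightarrow> 'b"
  assumes "finite A"
  shows "(\<Sum>x\<in>A. \<Sum>y\<in>A. f x * cnj (f y) * (if g x = g y then 1 else 0))
       = of_real (\<Sum>b\<in>g ` A. (norm (\<Sum>x\<in>{x\<in>A. g x = b}. f x))\<^sup>2)"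
proof -
  define S where "S b = (\<Sum>x\<in>{x\<in>A. g x = b}. f x)" for b
  have "(\<Sum>x\<in>A. \<Sum>y\<in>A. f x * cnj (f y) * (if g x = g y then 1 else 0)) = (\<Sum>x\<in>A. f x * cnj (S (g x)))"
    using assms by (simp add: S_def sum_distrib_left if_distrib sum.inter_filter eq_commute cong: if_cong)
  also have "\<dots> = (\<Sum>b\<in>g ` A. \<Sum>x\<in>{x\<in>A. g x = b}. f x * cnj (S b))"
    using assms by (subst sum.image_gen[where g = g]) (auto intro!: sum.cong)
  also have "\<dots> = (\<Sum>b\<in>g ` A. S b * cnj (S b))"
    by (simp add: S_def sum_distrib_right)
  also have "\<dots> = of_real (\<Sum>b\<in>g ` A. (norm (S b))\<^sup>2)"
    by (simp flip: complex_norm_square)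
  finally show ?thesis
    by (simp only: S_def)
qed

lemma odd_card_imp_odd_fibre:
  assumes "finite A" "odd (card A)"
  obtains b where "b \<in> g ` A" "odd (card {x\<in>A. g x = b})"
proof (rule ccontr)
  assume "\<not> thesis"
  then have "\<forall>b\<in>g ` A. even (card {x\<in>A. g x = b})"
    using that by blast
  moreover have "card A = (\<Sum>b\<in>g ` A. card {x\<in>A. g x = b})"
    using sum.image_gen[OF assms(1), of "\<lambda>_. 1 :: nat" g] by (simp flip: card_eq_sum)
  ultimately have "even (card A)"
    by (simp only:) (rule dvd_sum, blast)
  with assms(2) show False by simp
qed

lemma sum_i_power_nonzero:
  assumes "finite B" "odd (card B)" "\<And>x. x \<in> B \<Longrightarrow> e x mod 2 = b"
  shows "(\<Sum>x\<in>B. \<i> ^ e x) \<noteq> 0"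
proof -
  define s where "s = (\<Sum>x\<in>B. (-1::int) ^ (e x div 2))"
  have "\<i> ^ e x = \<i> ^ b * of_int ((-1) ^ (e x div 2))" if "x \<in> B" for x
  proof -
    have "e x = 2 * (e x div 2) + b" using assms(3)[OF that] by presburger
    then have "\<i> ^ e x = (\<i>\<^sup>2) ^ (e x div 2) * \<i> ^ b"
      by (metis power_add power_mult)
    then show ?thesis by simp
  qed
  then have sum_eq: "(\<Sum>x\<in>B. \<i> ^ e x) = \<i> ^ b * of_int s"
    by (simp add: s_def sum_distrib_left)
  have "odd s"
    using assms(1,2) by (simp add: s_def even_sum_iff)
  then have "s \<noteq> 0"
    by (metis even_zero)
  with sum_eq show ?thesis
    by simp
qed

theorem lemma2p6:
  fixes n :: nat and A :: "nat list set"
  assumes "n \<ge> 1" and "A \<subseteq> Omega n" and "odd (card A)"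
  shows "mu n A \<noteq> 0"
proof -
  have fin: "finite A"
    using assms(3) card.infinite by force
  define phase where "phase w = \<i> ^ variation n w" for w
  define endpoint where "endpoint w = w ! n" for w :: "nat list"
  define class_norm2 where
    "class_norm2 b = (norm (\<Sum>w\<in>{w\<in>A. endpoint w = b}. phase w))\<^sup>2" for b
  have "mu n A = (\<Sum>w\<in>A. \<Sum>w'\<in>A. phase w * cnj (phase w') * (if endpoint w = endpoint w' then 1 else 0)) / 2 ^ n"
    by (simp add: mu_def D_eq_i_power_variation phase_def endpoint_def sum_divide_distrib)
  also have "\<dots> = of_real (\<Sum>b\<in>endpoint ` A. class_norm2 b) / 2 ^ n"
    unfolding sum_sum_cnj_eq_sum_norm_fibres[OF fin] class_norm2_def ..
  finally have mu_eq: "mu n A = of_real (\<Sum>b\<in>endpoint ` A. class_norm2 b) / 2 ^ n" .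
  obtain b where b: "b \<in> endpoint ` A" "odd (card {w\<in>A. endpoint w = b})"
    using odd_card_imp_odd_fibre[OF fin assms(3)] .
  have "(\<Sum>w\<in>{w\<in>A. endpoint w = b}. phase w) \<noteq> 0"
    unfolding phase_def
    by (rule sum_i_power_nonzero[where b = b]) (use fin b assms(2) variation_mod_2 endpoint_def in auto)
  then have "0 < (\<Sum>b\<in>endpoint ` A. class_norm2 b)"
    using fin b(1) by (intro sum_pos2) (auto simp: class_norm2_def)
  then show ?thesis
    unfolding mu_eq by (simp del: of_real_sum)
qed

end
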